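(* Let $G=(V,E)$ be a graph and $f:\{0,1\}^V\to\mathbb{R}_{\ge0}$ a nonnegative submodular function (viewed as a function of binary assignments $\overline{X}=\{X_v\}_{v\in V}$) which is a local utility function. Given a legal $c$-coloring of $G$, there exist a randomized distributed algorithm outputting $\overline{X}$ with $E[f(\overline{X})]\ge\frac12\max_{\overline{Y}}f(\overline{Y})$, and a deterministic distributed algorithm outputting $\overline{X}$ with $f(\overline{X})\ge\frac13\max_{\overline{Y}}f(\overline{Y})$, both running in $O(c)$ communication rounds in the CONGEST model.
   Context: Submodular: $f(S)+f(T)\ge f(S\cup T)+f(S\cap T)$ for all $S,T\subseteq V$, identifying a binary assignment with the set of vertices assigned 1. $L_v[\overline{X}]$ is the restriction of an assignment to the neighbours of $v$, passed together with the 1-hop neighbourhood of $v$. $f$ is a local utility function if for every $v$ there is $g_v$ with $f(\overline{X}\cup\{X_v=\alpha\})-f(\overline{X}\cup\{X_v=\alpha'\})=g_v(L_v[\overline{X}],\alpha,\alpha')$ for all $\overline{X}$ and $\alpha,\alpha'\in\{0,1\}$. CONGEST: synchronous rounds, $O(\log n)$-bit messages per edge per round. A legal coloring gives adjacent vertices different colors. *)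

theory Defs
  imports "HOL-Probability.Probability"
begin

text \<open>A (simple undirected) graph on a finite vertex set V of naturals is given by a
symmetric irreflexive adjacency predicate E. A binary assignment is identified with
the set of vertices assigned 1.\<close>

definition graph_on :: "nat set \<Rightarrow> (nat \<Rightarrow> nat \<Rightarrow> bool) \<Rightarrow> bool" where
  "graph_on V E \<longleftrightarrow> finite V \<and> (\<forall>u v. E u v \<longrightarrow> u \<in> V \<and> v \<in> V \<and> u \<noteq> v \<and> E v u)"

definition nbrs_of :: "nat set \<Rightarrow> (nat \<Rightarrow> nat \<Rightarrow> bool) \<Rightarrow> nat \<Rightarrow> nat set" where
  "nbrs_of V E v = {u \<in> V. E v u}"

definition legal_coloring :: "nat set \<Rightarrow> (nat \<Rightarrow> nat \<Rightarrow> bool) \<Rightarrow> nat \<Rightarrow> (nat \<Rightarrow> nat) \<Rightarrow> bool" where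
  "legal_coloring V E c col \<longleftrightarrow> (\<forall>v\<in>V. col v < c) \<and> (\<forall>u v. E u v \<longrightarrow> col u \<noteq> col v)"

definition submodular_on :: "nat set \<Rightarrow> (nat set \<Rightarrow> real) \<Rightarrow> bool" where
  "submodular_on V f \<longleftrightarrow> (\<forall>S T. S \<subseteq> V \<longrightarrow> T \<subseteq> V \<longrightarrow> f S + f T \<ge> f (S \<union> T) + f (S \<inter> T))"

definition set_val :: "nat set \<Rightarrow> nat \<Rightarrow> bool \<Rightarrow> nat set" where
  "set_val X v a = (if a then insert v X else X - {v})"

definition restrict_nbrs :: "nat set \<Rightarrow> (nat \<Rightarrow> nat \<Rightarrow> bool) \<Rightarrow> nat \<Rightarrow> nat set \<Rightarrow> (nat \<Rightarrow> bool)" where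
  "restrict_nbrs V E v X = (\<lambda>u. u \<in> nbrs_of V E v \<and> u \<in> X)"

definition local_utility_via ::
  "nat set \<Rightarrow> (nat \<Rightarrow> nat \<Rightarrow> bool) \<Rightarrow> (nat set \<Rightarrow> real) \<Rightarrow> (nat \<Rightarrow> (nat \<Rightarrow> bool) \<Rightarrow> bool \<Rightarrow> bool \<Rightarrow> real) \<Rightarrow> bool" where
  "local_utility_via V E f g \<longleftrightarrow>
     (\<forall>v\<in>V. \<forall>X. X \<subseteq> V \<longrightarrow> (\<forall>a a'.
        f (set_val X v a) - f (set_val X v a') = g v (restrict_nbrs V E v X) a a'))"

record linp =
  nid :: nat
  nsize :: nat
  ncolors :: nat
  ncolor :: nat
  nnbrs :: "nat set"
  ngfun :: "(nat \<Rightarrow> bool) \<Rightarrow> bool \<Rightarrow> bool \<Rightarrow> real"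

type_synonym history = "(nat \<Rightarrow> bool list) list"

text \<open>The extra local
argument of type 'r is the node's private randomness (unit for deterministic
algorithms). In each round a node sends to each neighbour u the bit string
amsg inp r h u, where h is the list of messages received in previous rounds
(indexed by sender).\<close>
record 'r dalg =
  amsg :: "linp \<Rightarrow> 'r \<Rightarrow> history \<Rightarrow> nat \<Rightarrow> bool list"
  aout :: "linp \<Rightarrow> 'r \<Rightarrow> history \<Rightarrow> bool"

primrec hist :: "'r dalg \<Rightarrow> (nat \<Rightarrow> linp) \<Rightarrow> (nat \<Rightarrow> 'r) \<Rightarrow> nat \<Rightarrow> nat \<Rightarrow> history" where
  "hist A I R 0 = (\<lambda>v. [])"
| "hist A I R (Suc t) = (\<lambda>v. hist A I R t v @
      [\<lambda>u. if u \<in> nnbrs (I v) then amsg A (I u) (R u) (hist A I R t u) v else []])"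

definition congest_ok :: "nat \<Rightarrow> 'r dalg \<Rightarrow> nat set \<Rightarrow> (nat \<Rightarrow> linp) \<Rightarrow> (nat \<Rightarrow> 'r) \<Rightarrow> nat \<Rightarrow> bool" where
  "congest_ok K A V I R T \<longleftrightarrow>
     (\<forall>t<T. \<forall>v\<in>V. \<forall>u\<in>nnbrs (I v).
        real (length (amsg A (I v) (R v) (hist A I R t v) u)) \<le> real K * (1 + log 2 (real (card V))))"

definition output_set :: "'r dalg \<Rightarrow> nat set \<Rightarrow> (nat \<Rightarrow> linp) \<Rightarrow> (nat \<Rightarrow> 'r) \<Rightarrow> nat \<Rightarrow> nat set" where
  "output_set A V I R T = {v \<in> V. aout A (I v) (R v) (hist A I R T v)}"

definition local_inputs ::
  "nat set \<Rightarrow> (nat \<Rightarrow> nat \<Rightarrow> bool) \<Rightarrow> nat \<Rightarrow> (nat \<Rightarrow> nat) \<Rightarrow> (nat \<Rightarrow> (nat \<Rightarrow> bool) \<Rightarrow> bool \<Rightarrow> bool \<Rightarrow> real) \<Rightarrow> nat \<Rightarrow> linp" where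
  "local_inputs V E c col g v =
     \<lparr>nid = v, nsize = card V, ncolors = c, ncolor = col v, nnbrs = nbrs_of V E v, ngfun = g v\<rparr>"

definition rand_space :: "nat set \<Rightarrow> (nat \<Rightarrow> real) measure" where
  "rand_space V = PiM V (\<lambda>_. uniform_measure lborel {0..1::real})"

end

theory Submission
  imports Defs
begin

text \<open>Vertices decide one colour class per round, a vertex v in round col v, and broadcast their
decision as a single bit. Since colour classes are independent and f is a local utility function,
the marginal gains a = f (X + v) - f X and b = f (Y - v) - f Y of the sequential double greedy
algorithm of Buchbinder, Feldman, Naor and Schwartz are values of g_v on the bits of the
lower-coloured neighbours of v, which have all arrived by round col v. So after c rounds the nodes
have run double greedy along an order compatible with the colouring. Adding v when b \<le> a, or
with probability max a 0 / (max a 0 + max b 0), never decreases the potential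
f ((OPT \<union> X) \<inter> Y) + f X + f Y, respectively (in expectation)
f ((OPT \<union> X) \<inter> Y) + (f X + f Y) / 2; it starts at least at f OPT and ends at
3 f X, respectively 2 f X.\<close>

section \<open>Double greedy for submodular functions\<close>

definition add_gain :: "(nat set \<Rightarrow> real) \<Rightarrow> nat \<Rightarrow> nat set \<Rightarrow> real" where
  "add_gain f w X = f (insert w X) - f X"

definition del_gain :: "(nat set \<Rightarrow> real) \<Rightarrow> nat \<Rightarrow> nat set \<Rightarrow> real" where
  "del_gain f w Y = f (Y - {w}) - f Y"

definition greedy_step :: "nat \<Rightarrow> bool \<Rightarrow> nat set \<times> nat set \<Rightarrow> nat set \<times> nat set" where
  "greedy_step w d s = (if d then (insert w (fst s), snd s) else (fst s, snd s - {w}))"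

definition opt_proj :: "nat set \<Rightarrow> nat set \<times> nat set \<Rightarrow> nat set" where
  "opt_proj Opt s = (Opt \<union> fst s) \<inter> snd s"

definition det_potential :: "(nat set \<Rightarrow> real) \<Rightarrow> nat set \<Rightarrow> nat set \<times> nat set \<Rightarrow> real" where
  "det_potential f Opt s = f (opt_proj Opt s) + f (fst s) + f (snd s)"

definition rand_potential :: "(nat set \<Rightarrow> real) \<Rightarrow> nat set \<Rightarrow> nat set \<times> nat set \<Rightarrow> real" where
  "rand_potential f Opt s = f (opt_proj Opt s) + (f (fst s) + f (snd s)) / 2"

(* a\<^sup>+ / (a\<^sup>+ + b\<^sup>+), and 1 when both vanish *)
definition add_prob :: "real \<Rightarrow> real \<Rightarrow> real" where
  "add_prob a b = (if b \<le> 0 then 1 else if a \<le> 0 then 0 else a / (a + b))"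

lemma add_prob_bounds: "0 \<le> add_prob a b" "add_prob a b \<le> 1"
  by (auto simp: add_prob_def)

lemma add_prob_loss_le_half_gain:
  fixes a b :: real
  assumes "0 \<le> a + b"
  defines "p \<equiv> add_prob a b"
  shows "(1 - p) * a \<le> (p * a + (1 - p) * b) / 2" and "p * b \<le> (p * a + (1 - p) * b) / 2"
proof -
  consider "b \<le> 0" | "0 < b" "a \<le> 0" | "0 < a" "0 < b"
    by linarith
  then have "(1 - p) * a \<le> (p * a + (1 - p) * b) / 2 \<and> p * b \<le> (p * a + (1 - p) * b) / 2"
  proof cases
    case 3
    then have "p = a / (a + b)" "1 - p = b / (a + b)"
      by (simp_all add: p_def add_prob_def field_simps)
    then have "(1 - p) * a = a * b / (a + b)" "p * b = a * b / (a + b)"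
      and "p * a + (1 - p) * b = (a * a + b * b) / (a + b)"
      by (simp_all add: add_divide_distrib)
    moreover have "a * b / (a + b) \<le> (a * a + b * b) / 2 / (a + b)"
      using 3 sum_squares_bound[of a b] by (intro divide_right_mono) (simp_all add: power2_eq_square)
    ultimately show ?thesis
      by (simp add: mult.commute)
  qed (use assms in \<open>auto simp: p_def add_prob_def\<close>)
  then show "(1 - p) * a \<le> (p * a + (1 - p) * b) / 2" "p * b \<le> (p * a + (1 - p) * b) / 2"
    by auto
qed

lemma submodular_onD:
  "submodular_on V f \<Longrightarrow> S \<subseteq> V \<Longrightarrow> T \<subseteq> V \<Longrightarrow> f (S \<union> T) + f (S \<inter> T) \<le> f S + f T"
  unfolding submodular_on_def by blast

context
  fixes V :: "nat set" and f :: "nat set \<Rightarrow> real" and X Y :: "nat set" and w :: nat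
  assumes submod: "submodular_on V f" and XY: "X \<subseteq> Y" "Y \<subseteq> V" and w: "w \<in> Y" "w \<notin> X"
begin

lemma add_gain_plus_del_gain_nonneg: "0 \<le> add_gain f w X + del_gain f w Y"
proof -
  have "insert w X \<union> (Y - {w}) = Y" "insert w X \<inter> (Y - {w}) = X"
    using XY w by auto
  moreover have "insert w X \<subseteq> V" "Y - {w} \<subseteq> V"
    using XY w by auto
  ultimately show ?thesis
    using submodular_onD[OF submod, of "insert w X" "Y - {w}"] by (simp add: add_gain_def del_gain_def)
qed

lemma opt_proj_greedy_step_add:
  "f (opt_proj Opt (X, Y)) - (if w \<in> Opt then 0 else del_gain f w Y) \<le> f (opt_proj Opt (insert w X, Y))"
proof (cases "w \<in> Opt")
  case True
  then show ?thesis by (simp add: opt_proj_def insert_absorb)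
next
  case False
  let ?S = "(Opt \<union> insert w X) \<inter> Y"
  have "?S \<union> (Y - {w}) = Y" "?S \<inter> (Y - {w}) = (Opt \<union> X) \<inter> Y"
    using XY w False by auto
  moreover have "?S \<subseteq> V" "Y - {w} \<subseteq> V"
    using XY by auto
  ultimately show ?thesis
    using False submodular_onD[OF submod, of ?S "Y - {w}"] by (simp add: opt_proj_def del_gain_def)
qed

lemma opt_proj_greedy_step_del:
  "f (opt_proj Opt (X, Y)) - (if w \<in> Opt then add_gain f w X else 0) \<le> f (opt_proj Opt (X, Y - {w}))"
proof (cases "w \<in> Opt")
  case True
  let ?T = "(Opt \<union> X) \<inter> (Y - {w})"
  have "insert w X \<union> ?T = (Opt \<union> X) \<inter> Y" "insert w X \<inter> ?T = X"
    using XY w True by auto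
  moreover have "insert w X \<subseteq> V" "?T \<subseteq> V"
    using XY w by auto
  ultimately show ?thesis
    using True submodular_onD[OF submod, of "insert w X" ?T] by (simp add: opt_proj_def add_gain_def)
next
  case False
  then have "(Opt \<union> X) \<inter> (Y - {w}) = (Opt \<union> X) \<inter> Y"
    using w by blast
  then show ?thesis
    using False by (simp add: opt_proj_def)
qed

lemma det_potential_greedy_step:
  "det_potential f Opt (X, Y)
     \<le> det_potential f Opt (greedy_step w (del_gain f w Y \<le> add_gain f w X) (X, Y))"
proof (cases "del_gain f w Y \<le> add_gain f w X")
  case True
  then have "f (opt_proj Opt (X, Y)) \<le> f (opt_proj Opt (insert w X, Y)) + add_gain f w X"
    using opt_proj_greedy_step_add[of Opt] add_gain_plus_del_gain_nonneg by (auto split: if_splits)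
  with True show ?thesis
    by (simp add: det_potential_def greedy_step_def add_gain_def)
next
  case False
  then have "f (opt_proj Opt (X, Y)) \<le> f (opt_proj Opt (X, Y - {w})) + del_gain f w Y"
    using opt_proj_greedy_step_del[of Opt] add_gain_plus_del_gain_nonneg by (auto split: if_splits)
  with False show ?thesis
    by (simp add: det_potential_def greedy_step_def del_gain_def)
qed

lemma rand_potential_greedy_step:
  defines "p \<equiv> add_prob (add_gain f w X) (del_gain f w Y)"
  shows "rand_potential f Opt (X, Y)
     \<le> p * rand_potential f Opt (greedy_step w True (X, Y))
       + (1 - p) * rand_potential f Opt (greedy_step w False (X, Y))"
proof -
  define a b where "a = add_gain f w X" and "b = del_gain f w Y"
  define d\<^sub>1 d\<^sub>0 where "d\<^sub>1 = f (opt_proj Opt (insert w X, Y)) - f (opt_proj Opt (X, Y))"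
    and "d\<^sub>0 = f (opt_proj Opt (X, Y - {w})) - f (opt_proj Opt (X, Y))"
  have p: "0 \<le> p" "p \<le> 1"
    using add_prob_bounds by (simp_all add: p_def)
  have loss: "(1 - p) * a \<le> (p * a + (1 - p) * b) / 2" "p * b \<le> (p * a + (1 - p) * b) / 2"
    using add_prob_loss_le_half_gain[OF add_gain_plus_del_gain_nonneg] by (simp_all add: p_def a_def b_def)
  have "0 \<le> p * d\<^sub>1 + (1 - p) * d\<^sub>0 + (p * a + (1 - p) * b) / 2"
  proof (cases "w \<in> Opt")
    case True
    then have "0 \<le> d\<^sub>1" "- a \<le> d\<^sub>0"
      using opt_proj_greedy_step_add[of Opt] opt_proj_greedy_step_del[of Opt]
      by (simp_all add: d\<^sub>1_def d\<^sub>0_def a_def)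
    with p have "0 \<le> p * d\<^sub>1" "(1 - p) * (- a) \<le> (1 - p) * d\<^sub>0"
      by (simp, intro mult_left_mono) simp_all
    with loss show ?thesis by linarith
  next
    case False
    then have "- b \<le> d\<^sub>1" "0 \<le> d\<^sub>0"
      using opt_proj_greedy_step_add[of Opt] opt_proj_greedy_step_del[of Opt]
      by (simp_all add: d\<^sub>1_def d\<^sub>0_def b_def)
    with p have "p * (- b) \<le> p * d\<^sub>1" "0 \<le> (1 - p) * d\<^sub>0"
      by (intro mult_left_mono, simp_all)
    with loss show ?thesis by linarith
  qed
  then show ?thesis
    by (simp add: rand_potential_def greedy_step_def d\<^sub>1_def d\<^sub>0_def a_def b_def
        add_gain_def del_gain_def field_simps)
qed

end

section \<open>The distributed algorithm\<close>

lemma local_utility_viaD: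
  "local_utility_via V E f g \<Longrightarrow> v \<in> V \<Longrightarrow> X \<subseteq> V \<Longrightarrow>
    f (set_val X v a) - f (set_val X v a') = g v (restrict_nbrs V E v X) a a'"
  by (simp add: local_utility_via_def)

lemma local_utility_add_gain:
  assumes "local_utility_via V E f g" "v \<in> V" "X \<subseteq> V" "v \<notin> X"
  shows "g v (restrict_nbrs V E v X) True False = add_gain f v X"
proof -
  from local_utility_viaD[OF assms(1-3), of True False]
  show ?thesis
    using assms(4) by (simp add: set_val_def add_gain_def)
qed

lemma local_utility_del_gain:
  assumes "local_utility_via V E f g" "v \<in> V" "Y \<subseteq> V" "v \<in> Y"
  shows "g v (restrict_nbrs V E v Y) False True = del_gain f v Y"
proof -
  from local_utility_viaD[OF assms(1-3), of False True]
  show ?thesis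
    using assms(4) by (simp add: set_val_def del_gain_def insert_absorb)
qed

lemma length_hist: "length (hist A I R t v) = t"
  by (induction t arbitrary: v) auto

lemma take_hist: "j \<le> t \<Longrightarrow> take j (hist A I R t v) = hist A I R j v"
proof (induction t)
  case (Suc t)
  then show ?case
    using length_hist[of A I R "Suc t" v] length_hist[of A I R t v] by (cases "j = Suc t") auto
qed simp

lemma nth_hist:
  "k < t \<Longrightarrow> hist A I R t v ! k =
     (\<lambda>u. if u \<in> nnbrs (I v) then amsg A (I u) (R u) (hist A I R k u) v else [])"
proof (induction t)
  case (Suc t)
  show ?case
  proof (cases "k = t")
    case True
    show ?thesis
      unfolding True using length_hist[of A I R t v] by (simp add: nth_append)
  next
    case False
    with Suc show ?thesis
      using length_hist[of A I R t v] by (simp add: nth_append)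
  qed
qed simp

(* A node of colour k announces its decision in round k. A neighbour that has announced nothing
   yet is undecided: it lies outside X and inside Y. *)
definition announced_in :: "nat set \<Rightarrow> history \<Rightarrow> nat \<Rightarrow> bool" where
  "announced_in N h = (\<lambda>u. u \<in> N \<and> (\<exists>k<length h. (h!k) u = [True]))"

definition not_announced_out :: "nat set \<Rightarrow> history \<Rightarrow> nat \<Rightarrow> bool" where
  "not_announced_out N h = (\<lambda>u. u \<in> N \<and> \<not> (\<exists>k<length h. (h!k) u = [False]))"

definition local_decision :: "('r \<Rightarrow> real \<Rightarrow> real \<Rightarrow> bool) \<Rightarrow> linp \<Rightarrow> 'r \<Rightarrow> history \<Rightarrow> bool" where
  "local_decision rule inp r h =
     rule r (ngfun inp (announced_in (nnbrs inp) h) True False)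
       (ngfun inp (not_announced_out (nnbrs inp) h) False True)"

definition greedy_alg :: "('r \<Rightarrow> real \<Rightarrow> real \<Rightarrow> bool) \<Rightarrow> 'r dalg" where
  "greedy_alg rule =
     \<lparr>amsg = (\<lambda>inp r h u. if length h = ncolor inp then [local_decision rule inp r h] else []),
      aout = (\<lambda>inp r h. local_decision rule inp r (take (ncolor inp) h))\<rparr>"

definition det_rule :: "unit \<Rightarrow> real \<Rightarrow> real \<Rightarrow> bool" where
  "det_rule r a b \<longleftrightarrow> b \<le> a"

definition rand_rule :: "real \<Rightarrow> real \<Rightarrow> real \<Rightarrow> bool" where
  "rand_rule r a b \<longleftrightarrow> r \<le> add_prob a b"

lemma congest_ok_greedy_alg:
  assumes "finite V"
  shows "congest_ok 1 (greedy_alg rule) V I R T"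
  unfolding congest_ok_def
proof (intro allI impI ballI)
  fix t v u
  assume "v \<in> V"
  then have "card V > 0"
    using assms card_gt_0_iff by blast
  then have "0 \<le> log 2 (real (card V))"
    by simp
  moreover have "length (amsg (greedy_alg rule) (I v) (R v) (hist (greedy_alg rule) I R t v) u) \<le> 1"
    by (simp add: greedy_alg_def)
  ultimately show "real (length (amsg (greedy_alg rule) (I v) (R v) (hist (greedy_alg rule) I R t v) u))
      \<le> real 1 * (1 + log 2 (real (card V)))"
    by simp
qed

abbreviation unit_uniform :: "real measure" where
  "unit_uniform \<equiv> uniform_measure lborel {0..1}"

lemma prob_space_unit_uniform: "prob_space unit_uniform"
  by (rule prob_space_uniform_measure) auto

lemma prob_space_rand_space: "prob_space (rand_space J)"
  unfolding rand_space_def by (rule prob_space_PiM) (rule prob_space_unit_uniform)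

lemma product_prob_space_unit_uniform: "product_prob_space (\<lambda>_. unit_uniform)"
  by (rule product_prob_spaceI) (rule prob_space_unit_uniform)

lemma integral_unit_uniform_threshold:
  fixes a b :: real
  assumes "0 \<le> p" "p \<le> 1"
  shows "(\<integral>y. (if y \<le> p then a else b) \<partial>unit_uniform) = p * a + (1 - p) * b"
proof -
  interpret prob_space unit_uniform
    by (rule prob_space_unit_uniform)
  have "(\<lambda>y. if y \<le> p then a else b) = (\<lambda>y. b + (a - b) * indicator {..p} y)"
    by (auto simp: indicator_def fun_eq_iff)
  moreover have "measure unit_uniform {..p} = p"
    using assms by (simp add: Int_commute)
  moreover have "integrable unit_uniform (indicator {..p} :: real \<Rightarrow> real)"
    by (rule integrable_const_bound[where B = 1]) auto
  ultimately show ?thesis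
    by (simp add: algebra_simps)
qed

lemma measurable_rand_space_component:
  assumes "w \<in> J"
  shows "(\<lambda>R. R w) \<in> borel_measurable (rand_space J)"
proof -
  have "(\<lambda>R. R w) \<in> measurable (rand_space J) unit_uniform"
    unfolding rand_space_def using assms by (rule measurable_component_singleton)
  moreover have "measurable (rand_space J) unit_uniform = measurable (rand_space J) borel"
    by (rule measurable_cong_sets) auto
  ultimately show ?thesis
    by simp
qed

section \<open>Double greedy along the colouring\<close>

locale distributed_double_greedy =
  fixes V :: "nat set" and E :: "nat \<Rightarrow> nat \<Rightarrow> bool" and c :: nat and col :: "nat \<Rightarrow> nat"
    and f :: "nat set \<Rightarrow> real" and g :: "nat \<Rightarrow> (nat \<Rightarrow> bool) \<Rightarrow> bool \<Rightarrow> bool \<Rightarrow> real"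
  assumes graph: "graph_on V E" and coloring: "legal_coloring V E c col"
    and submodular: "submodular_on V f" and local_utility: "local_utility_via V E f g"
begin

abbreviation inputs :: "nat \<Rightarrow> linp" where
  "inputs \<equiv> local_inputs V E c col g"

definition decision :: "('r \<Rightarrow> real \<Rightarrow> real \<Rightarrow> bool) \<Rightarrow> (nat \<Rightarrow> 'r) \<Rightarrow> nat \<Rightarrow> bool" where
  "decision rule R v = local_decision rule (inputs v) (R v) (hist (greedy_alg rule) inputs R (col v) v)"

lemma finite_V: "finite V"
  using graph by (simp add: graph_on_def)

lemma nth_hist_greedy_alg:
  "k < t \<Longrightarrow> hist (greedy_alg rule) inputs R t v ! k =
     (\<lambda>u. if u \<in> nbrs_of V E v \<and> col u = k then [decision rule R u] else [])"
  by (auto simp: nth_hist greedy_alg_def local_inputs_def length_hist decision_def fun_eq_iff)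

lemma decision_unfold:
  "decision rule R v = rule (R v)
     (g v (\<lambda>u. u \<in> nbrs_of V E v \<and> col u < col v \<and> decision rule R u) True False)
     (g v (\<lambda>u. u \<in> nbrs_of V E v \<and> \<not> (col u < col v \<and> \<not> decision rule R u)) False True)"
proof -
  let ?h = "hist (greedy_alg rule) inputs R (col v) v"
  have "announced_in (nbrs_of V E v) ?h = (\<lambda>u. u \<in> nbrs_of V E v \<and> col u < col v \<and> decision rule R u)"
    and "not_announced_out (nbrs_of V E v) ?h
      = (\<lambda>u. u \<in> nbrs_of V E v \<and> \<not> (col u < col v \<and> \<not> decision rule R u))"
    by (auto simp: announced_in_def not_announced_out_def length_hist nth_hist_greedy_alg fun_eq_iff
        split: if_splits)
  then show ?thesis
    by (subst decision_def) (simp add: local_decision_def local_inputs_def)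
qed

lemma output_set_greedy_alg: "output_set (greedy_alg rule) V inputs R c = {v \<in> V. decision rule R v}"
  using coloring
  by (auto simp: output_set_def legal_coloring_def greedy_alg_def local_inputs_def decision_def
      take_hist less_imp_le)


(* Once the vertices of such a W have decided, their decisions do not depend on vertices
   outside W, so W can be processed first, in order of colour. *)
definition color_closed :: "nat set \<Rightarrow> bool" where
  "color_closed W \<longleftrightarrow> W \<subseteq> V \<and> (\<forall>w\<in>W. \<forall>u. E w u \<and> col u < col w \<longrightarrow> u \<in> W)"

lemma color_closed_V: "color_closed V"
  using graph by (auto simp: color_closed_def graph_on_def)

lemma finite_color_closed: "color_closed W \<Longrightarrow> finite W"
  using finite_V by (auto simp: color_closed_def intro: finite_subset)

lemma color_closed_remove_max:
  assumes "color_closed W" "\<forall>x\<in>W. col x \<le> col w"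
  shows "color_closed (W - {w})"
  using assms by (fastforce simp: color_closed_def)

lemma color_closed_induct [consumes 1, case_names empty remove]:
  assumes "color_closed W" and "P {}"
    and remove: "\<And>W w. color_closed W \<Longrightarrow> w \<in> W \<Longrightarrow> \<forall>x\<in>W. col x \<le> col w \<Longrightarrow>
      color_closed (W - {w}) \<Longrightarrow> P (W - {w}) \<Longrightarrow> P W"
  shows "P W"
proof -
  from assms(1) have "finite W"
    by (rule finite_color_closed)
  then have "color_closed W \<longrightarrow> P W"
  proof (induction W rule: finite_remove_induct)
    case (remove W)
    show ?case
    proof
      assume W: "color_closed W"
      have "Max (col ` W) \<in> col ` W"
        using remove.hyps(1,2) by simp
      then obtain w where w: "w \<in> W" "col w = Max (col ` W)"
        by auto
      then have "\<forall>x\<in>W. col x \<le> col w"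
        using remove.hyps(1) by simp
      with W w show "P W"
        using remove.IH color_closed_remove_max by (blast intro: assms(3))
    qed
  qed (use assms(2) in simp)
  with assms(1) show ?thesis
    by blast
qed

definition greedy_state :: "('r \<Rightarrow> real \<Rightarrow> real \<Rightarrow> bool) \<Rightarrow> (nat \<Rightarrow> 'r) \<Rightarrow> nat set \<Rightarrow> nat set \<times> nat set" where
  "greedy_state rule R W = ({u \<in> W. decision rule R u}, V - {u \<in> W. \<not> decision rule R u})"

lemma greedy_state_empty: "greedy_state rule R {} = ({}, V)"
  by (simp add: greedy_state_def)

lemma greedy_state_V: "greedy_state rule R V = ({v \<in> V. decision rule R v}, {v \<in> V. decision rule R v})"
  by (auto simp: greedy_state_def)

lemma greedy_state_subset: "W \<subseteq> V \<Longrightarrow> greedy_state rule R W \<in> Pow V \<times> Pow V"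
  by (auto simp: greedy_state_def)

lemma decision_greedy_state:
  fixes rule :: "'r \<Rightarrow> real \<Rightarrow> real \<Rightarrow> bool" and R :: "nat \<Rightarrow> 'r"
  assumes "color_closed W" "w \<in> W" "\<forall>x\<in>W. col x \<le> col w"
  defines "X \<equiv> fst (greedy_state rule R (W - {w}))" and "Y \<equiv> snd (greedy_state rule R (W - {w}))"
  shows "decision rule R w = rule (R w) (add_gain f w X) (del_gain f w Y)"
proof -
  have "w \<in> V"
    using assms(1,2) by (auto simp: color_closed_def)
  have earlier: "col u < col w \<longleftrightarrow> u \<in> W - {w}" if "u \<in> nbrs_of V E w" for u
  proof -
    from that have "E w u"
      by (simp add: nbrs_of_def)
    with coloring have "col w \<noteq> col u"
      unfolding legal_coloring_def by blast
    with \<open>E w u\<close> assms(1-3) show ?thesis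
      by (auto simp: color_closed_def)
  qed
  have "(\<lambda>u. u \<in> nbrs_of V E w \<and> col u < col w \<and> decision rule R u) = restrict_nbrs V E w X"
    and "(\<lambda>u. u \<in> nbrs_of V E w \<and> \<not> (col u < col w \<and> \<not> decision rule R u)) = restrict_nbrs V E w Y"
    using earlier by (auto simp: restrict_nbrs_def X_def Y_def greedy_state_def nbrs_of_def)
  moreover have "g w (restrict_nbrs V E w X) True False = add_gain f w X"
    by (rule local_utility_add_gain[OF local_utility \<open>w \<in> V\<close>])
      (use assms(1) in \<open>auto simp: X_def greedy_state_def color_closed_def\<close>)
  moreover have "g w (restrict_nbrs V E w Y) False True = del_gain f w Y"
    by (rule local_utility_del_gain[OF local_utility \<open>w \<in> V\<close>])
      (use \<open>w \<in> V\<close> in \<open>auto simp: Y_def greedy_state_def\<close>)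
  ultimately show ?thesis
    by (subst decision_unfold) simp
qed

lemma greedy_state_remove_max:
  fixes rule :: "'r \<Rightarrow> real \<Rightarrow> real \<Rightarrow> bool" and R :: "nat \<Rightarrow> 'r"
  assumes "color_closed W" "w \<in> W" "\<forall>x\<in>W. col x \<le> col w"
  defines "S \<equiv> greedy_state rule R (W - {w})"
  shows "greedy_state rule R W = greedy_step w (rule (R w) (add_gain f w (fst S)) (del_gain f w (snd S))) S"
  using assms decision_greedy_state[OF assms(1-3), of rule R, folded S_def, symmetric]
  by (auto simp: greedy_state_def greedy_step_def color_closed_def)

lemma greedy_state_remove_max_invariant:
  fixes rule :: "'r \<Rightarrow> real \<Rightarrow> real \<Rightarrow> bool" and R :: "nat \<Rightarrow> 'r"
  assumes "color_closed W" "w \<in> W"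
  defines "S \<equiv> greedy_state rule R (W - {w})"
  shows "fst S \<subseteq> snd S" "snd S \<subseteq> V" "w \<in> snd S" "w \<notin> fst S"
  using assms by (auto simp: greedy_state_def color_closed_def)

lemma det_potential_greedy_state:
  assumes "color_closed W"
  shows "det_potential f Opt ({}, V) \<le> det_potential f Opt (greedy_state det_rule R W)"
  using assms
proof (induction rule: color_closed_induct)
  case empty
  then show ?case
    by (simp add: greedy_state_empty)
next
  case (remove W w)
  obtain X Y where S: "greedy_state det_rule R (W - {w}) = (X, Y)"
    by fastforce
  note inv = greedy_state_remove_max_invariant[OF remove(1,2), of det_rule R, unfolded S fst_conv snd_conv]
  have "det_potential f Opt ({}, V) \<le> det_potential f Opt (X, Y)"
    using remove.IH by (simp only: S)
  also have "\<dots> \<le> det_potential f Opt (greedy_state det_rule R W)"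
    using det_potential_greedy_step[OF submodular inv] greedy_state_remove_max[OF remove(1-3), of det_rule R]
    by (simp add: S det_rule_def)
  finally show ?case .
qed


lemma greedy_state_cong:
  assumes "color_closed W" "\<forall>u\<in>W. R u = R' u"
  shows "greedy_state rule R W = greedy_state rule R' W"
  using assms
proof (induction arbitrary: R R' rule: color_closed_induct)
  case (remove W w)
  then have "greedy_state rule R (W - {w}) = greedy_state rule R' (W - {w})" "R w = R' w"
    by auto
  then show ?case
    using greedy_state_remove_max[OF remove(1-3), of rule R]
      greedy_state_remove_max[OF remove(1-3), of rule R'] by simp
qed (simp add: greedy_state_empty)

lemma measurable_greedy_state:
  fixes h :: "nat set \<times> nat set \<Rightarrow> real"
  assumes "color_closed W" "W \<subseteq> J"
  shows "(\<lambda>R. h (greedy_state rand_rule R W)) \<in> borel_measurable (rand_space J)"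
  using assms
proof (induction arbitrary: h rule: color_closed_induct)
  case (remove W w)
  let ?S = "\<lambda>R. greedy_state rand_rule R (W - {w})"
  let ?p = "\<lambda>s. add_prob (add_gain f w (fst s)) (del_gain f w (snd s))"
  have IH: "(\<lambda>R. h' (?S R)) \<in> borel_measurable (rand_space J)" for h' :: "nat set \<times> nat set \<Rightarrow> real"
    using remove.IH[of h'] remove.prems by auto
  have "(\<lambda>R. h (greedy_state rand_rule R W))
      = (\<lambda>R. if R w \<le> ?p (?S R) then (h \<circ> greedy_step w True) (?S R) else (h \<circ> greedy_step w False) (?S R))"
    using greedy_state_remove_max[OF remove(1-3), of rand_rule] by (simp add: fun_eq_iff rand_rule_def)
  moreover have "{R \<in> space (rand_space J). R w \<le> ?p (?S R)} \<in> sets (rand_space J)"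
    using remove IH[of ?p] by (intro borel_measurable_le measurable_rand_space_component) auto
  ultimately show ?case
    by (simp only:) (rule measurable_If[OF IH IH])
qed (simp add: greedy_state_empty)

lemma integrable_greedy_state:
  fixes h :: "nat set \<times> nat set \<Rightarrow> real"
  assumes "color_closed W" "W \<subseteq> J"
  shows "integrable (rand_space J) (\<lambda>R. h (greedy_state rand_rule R W))"
proof -
  interpret prob_space "rand_space J"
    by (rule prob_space_rand_space)
  have "\<bar>h (greedy_state rand_rule R W)\<bar> \<le> (\<Sum>s\<in>Pow V \<times> Pow V. \<bar>h s\<bar>)" for R
    using greedy_state_subset[of W rand_rule R] assms(1) finite_V
    by (intro member_le_sum[where f = "\<lambda>s. \<bar>h s\<bar>"]) (auto simp: color_closed_def)
  then show ?thesis
    by (intro integrable_const_bound measurable_greedy_state[OF assms]) auto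
qed

lemma rand_potential_greedy_state:
  assumes "color_closed W"
  shows "rand_potential f Opt ({}, V) \<le> (\<integral>R. rand_potential f Opt (greedy_state rand_rule R W) \<partial>rand_space W)"
  using assms
proof (induction rule: color_closed_induct)
  case empty
  interpret prob_space "rand_space {}"
    by (rule prob_space_rand_space)
  show ?case
    by (simp add: greedy_state_empty prob_space)
next
  case (remove W w)
  interpret product_prob_space "\<lambda>_. unit_uniform"
    by (rule product_prob_space_unit_uniform)
  let ?W' = "W - {w}" and ?\<Phi> = "rand_potential f Opt"
  let ?p = "\<lambda>s. add_prob (add_gain f w (fst s)) (del_gain f w (snd s))"
  let ?step = "\<lambda>s. ?p s * ?\<Phi> (greedy_step w True s) + (1 - ?p s) * ?\<Phi> (greedy_step w False s)"
  have "finite ?W'"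
    using finite_color_closed[OF remove(4)] .
  have "rand_potential f Opt ({}, V) \<le> (\<integral>R. ?\<Phi> (greedy_state rand_rule R ?W') \<partial>rand_space ?W')"
    by (rule remove.IH)
  also have "\<dots> \<le> (\<integral>R. ?step (greedy_state rand_rule R ?W') \<partial>rand_space ?W')"
  proof (rule integral_mono)
    show "integrable (rand_space ?W') (\<lambda>R. ?\<Phi> (greedy_state rand_rule R ?W'))"
      and "integrable (rand_space ?W') (\<lambda>R. ?step (greedy_state rand_rule R ?W'))"
      by (rule integrable_greedy_state[OF remove(4)], simp)+
    fix R
    show "?\<Phi> (greedy_state rand_rule R ?W') \<le> ?step (greedy_state rand_rule R ?W')"
      using rand_potential_greedy_step[OF submodular greedy_state_remove_max_invariant[OF remove(1,2)]]
      by simp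
  qed
  also have "\<dots> = (\<integral>R. (\<integral>y. ?\<Phi> (greedy_state rand_rule (R(w := y)) W) \<partial>unit_uniform) \<partial>rand_space ?W')"
  proof (rule Bochner_Integration.integral_cong[OF refl])
    fix R
    have "greedy_state rand_rule (R(w := y)) ?W' = greedy_state rand_rule R ?W'" for y
      by (rule greedy_state_cong[OF remove(4)]) simp
    then have "(\<lambda>y. ?\<Phi> (greedy_state rand_rule (R(w := y)) W))
        = (\<lambda>y. if y \<le> ?p (greedy_state rand_rule R ?W') then ?\<Phi> (greedy_step w True (greedy_state rand_rule R ?W'))
              else ?\<Phi> (greedy_step w False (greedy_state rand_rule R ?W')))"
      using greedy_state_remove_max[OF remove(1-3), of rand_rule "R(w := _)"]
      by (simp add: fun_eq_iff rand_rule_def)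
    then show "?step (greedy_state rand_rule R ?W') = (\<integral>y. ?\<Phi> (greedy_state rand_rule (R(w := y)) W) \<partial>unit_uniform)"
      using integral_unit_uniform_threshold[OF add_prob_bounds] by simp
  qed
  also have "\<dots> = (\<integral>R. ?\<Phi> (greedy_state rand_rule R W) \<partial>rand_space W)"
  proof -
    have W: "insert w ?W' = W"
      using remove(2) by blast
    have "integrable (Pi\<^sub>M (insert w ?W') (\<lambda>_. unit_uniform)) (\<lambda>R. ?\<Phi> (greedy_state rand_rule R W))"
      using integrable_greedy_state[OF remove(1), of W] unfolding W rand_space_def by simp
    from product_integral_insert[OF \<open>finite ?W'\<close> _ this] show ?thesis
      unfolding W rand_space_def by simp
  qed
  finally show ?case .
qed


lemma max_attained:
  obtains Opt where "Opt \<subseteq> V" "Max (f ` Pow V) = f Opt"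
proof -
  have "Max (f ` Pow V) \<in> f ` Pow V"
    using finite_V by (intro Max_in) auto
  with that show ?thesis
    by blast
qed

lemma det_greedy_output_ge_third:
  assumes "0 \<le> f {}" "0 \<le> f V"
  shows "1/3 * Max (f ` Pow V) \<le> f (output_set (greedy_alg det_rule) V inputs R c)"
proof -
  obtain Opt where Opt: "Opt \<subseteq> V" "Max (f ` Pow V) = f Opt"
    by (rule max_attained)
  have "f Opt \<le> det_potential f Opt ({}, V)"
    using assms Opt(1) by (simp add: det_potential_def opt_proj_def Int_absorb2)
  also have "\<dots> \<le> det_potential f Opt (greedy_state det_rule R V)"
    by (rule det_potential_greedy_state[OF color_closed_V])
  also have "\<dots> = 3 * f (output_set (greedy_alg det_rule) V inputs R c)"
    by (simp add: greedy_state_V output_set_greedy_alg det_potential_def opt_proj_def)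
  finally show ?thesis
    using Opt(2) by simp
qed

lemma rand_greedy_expected_output_ge_half:
  assumes "0 \<le> f {}" "0 \<le> f V"
  shows "1/2 * Max (f ` Pow V) \<le> (\<integral>R. f (output_set (greedy_alg rand_rule) V inputs R c) \<partial>rand_space V)"
proof -
  obtain Opt where Opt: "Opt \<subseteq> V" "Max (f ` Pow V) = f Opt"
    by (rule max_attained)
  have "f Opt \<le> rand_potential f Opt ({}, V)"
    using assms Opt(1) by (simp add: rand_potential_def opt_proj_def Int_absorb2)
  also have "\<dots> \<le> (\<integral>R. rand_potential f Opt (greedy_state rand_rule R V) \<partial>rand_space V)"
    by (rule rand_potential_greedy_state[OF color_closed_V])
  also have "\<dots> = 2 * (\<integral>R. f (output_set (greedy_alg rand_rule) V inputs R c) \<partial>rand_space V)"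
    by (simp add: greedy_state_V output_set_greedy_alg rand_potential_def opt_proj_def)
  finally show ?thesis
    using Opt(2) by simp
qed

end

theorem mainTheorem7:
  shows
  "(\<exists>(K::nat) (A :: real dalg).
      \<forall>V E c col f g.
        graph_on V E \<and> legal_coloring V E c col \<and>
        (\<forall>S. S \<subseteq> V \<longrightarrow> f S \<ge> 0) \<and> submodular_on V f \<and> local_utility_via V E f g \<longrightarrow>
        (\<forall>R. congest_ok K A V (local_inputs V E c col g) R (K * c)) \<and>
        (\<integral>R. f (output_set A V (local_inputs V E c col g) R (K * c)) \<partial>rand_space V)
          \<ge> (1/2) * Max (f ` Pow V))
   \<and>
   (\<exists>(K::nat) (A :: unit dalg).
      \<forall>V E c col f g.
        graph_on V E \<and> legal_coloring V E c col \<and>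
        (\<forall>S. S \<subseteq> V \<longrightarrow> f S \<ge> 0) \<and> submodular_on V f \<and> local_utility_via V E f g \<longrightarrow>
        congest_ok K A V (local_inputs V E c col g) (\<lambda>_. ()) (K * c) \<and>
        f (output_set A V (local_inputs V E c col g) (\<lambda>_. ()) (K * c))
          \<ge> (1/3) * Max (f ` Pow V))"
  by (intro conjI exI[where x = "1::nat"] exI[where x = "greedy_alg rand_rule"]
      exI[where x = "greedy_alg det_rule"] allI impI; unfold mult_1; elim conjE;
      intro conjI allI congest_ok_greedy_alg distributed_double_greedy.rand_greedy_expected_output_ge_half
        distributed_double_greedy.det_greedy_output_ge_third distributed_double_greedy.intro)
    (auto simp: graph_on_def)

end
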